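(* Let $n, m \ge 1$, let $\boldsymbol{y} \in \{0,1\}^n$ be a (true) binary label vector, and let $\boldsymbol{w}_1, \ldots, \boldsymbol{w}_m \in [0,1]^n$ be weak signals (non-abstaining, i.e. each labels all $n$ examples). For each $i$, let $\epsilon_i = \frac{1}{n}\left( (\mathbf{1} - 2\boldsymbol{w}_i)^\top \boldsymbol{y} + \boldsymbol{w}_i^\top \mathbf{1}\right)$ be the true expected error rate of $\boldsymbol{w}_i$ with respect to $\boldsymbol{y}$, and set $\boldsymbol{\epsilon} = (\epsilon_1, \ldots, \epsilon_m)^\top$. Let $\boldsymbol{A} \in \mathbb{R}^{m \times n}$ be the matrix whose $i$-th row is $(\mathbf{1} - 2\boldsymbol{w}_i)^\top$, and let $\boldsymbol{c} \in \mathbb{R}^m$ have entries $c_i = n\epsilon_i - \boldsymbol{w}_i^\top \mathbf{1}$ (so that $\boldsymbol{A}\boldsymbol{y} = \boldsymbol{c}$). Then for any $\tilde{\boldsymbol{y}} \in [0,1]^n$ with $\boldsymbol{A}\tilde{\boldsymbol{y}} = \boldsymbol{c}$, $$\|\tilde{\boldsymbol{y}} - (\mathbf{1} - \boldsymbol{y})\| \ge n \,\|\boldsymbol{A}^+ (\mathbf{1} - 2\boldsymbol{\epsilon})\|,$$ where $\|\cdot\|$ is the Euclidean norm and $\boldsymbol{A}^+$ is the Moore–Penrose pseudoinverse of $\boldsymbol{A}$.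
   Context: Setting: binary classification with $n$ unlabeled examples and $m$ weak supervision signals. $\mathbf{1}$ denotes the all-ones vector of the appropriate dimension ($\mathbf{1} \in \mathbb{R}^n$ in $\boldsymbol{w}_i^\top\mathbf{1}$, $\mathbf{1}-\boldsymbol{y}$, and $\mathbf{1} - 2\boldsymbol{w}_i$; $\mathbf{1} \in \mathbb{R}^m$ in $\mathbf{1} - 2\boldsymbol{\epsilon}$). The weak signals may be soft (entries in $[0,1]$) or hard (entries in $\{0,1\}$). The error rate $\epsilon_i$ equals $\frac{1}{n}\left(\boldsymbol{w}_i^\top(\mathbf{1}-\boldsymbol{y}) + (\mathbf{1}-\boldsymbol{w}_i)^\top \boldsymbol{y}\right)$. *)

theory Defs
  imports "HOL-Analysis.Analysis"
begin

text \<open>Moore--Penrose pseudoinverse, defined by the four Penrose conditions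
  (such a matrix exists and is unique for every real matrix).\<close>

definition is_pinv :: "real^'n^'m \<Rightarrow> real^'m^'n \<Rightarrow> bool" where
  "is_pinv A B \<longleftrightarrow>
     A ** B ** A = A \<and> B ** A ** B = B \<and>
     transpose (A ** B) = A ** B \<and> transpose (B ** A) = B ** A"

definition pinv :: "real^'n^'m \<Rightarrow> real^'m^'n" where
  "pinv A = (THE B. is_pinv A B)"

end

theory Submission
  imports Defs
begin

text \<open>Since \<open>A y = c = A yt\<close> and, row by row, \<open>A (1 - 2y) = n (1 - 2\<epsilon>)\<close>, we get
  \<open>A ((1 - y) - yt) = n (1 - 2\<epsilon>)\<close>. Hence \<open>n A\<^sup>+ (1 - 2\<epsilon>) = A\<^sup>+ A ((1 - y) - yt)\<close>, and
  \<open>A\<^sup>+ A\<close> is a symmetric idempotent, i.e. an orthogonal projection, so it does not increase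
  norms. The real work is the existence of the Moore--Penrose inverse, without
  which \<open>pinv A\<close> would be an unspecified matrix.\<close>

definition orthogonal_projection_onto :: "'a::real_inner set \<Rightarrow> ('a \<Rightarrow> 'a) \<Rightarrow> bool" where
  "orthogonal_projection_onto U P \<longleftrightarrow> (\<forall>x. P x \<in> U \<and> x - P x \<in> U\<^sup>\<bottom>)"

lemma orthogonal_projection_onto_exists:
  fixes U :: "'a::euclidean_space set"
  assumes "subspace U"
  obtains P where "linear P" "orthogonal_projection_onto U P"
proof -
  obtain B where "B \<subseteq> U" and orth: "pairwise orthogonal B"
    and unit: "\<And>x. x \<in> B \<Longrightarrow> norm x = 1" and "independent B" and span_B: "span B = U"
    using orthonormal_basis_subspace[OF assms] by metis
  then have "finite B" using independent_imp_finite by blast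
  define P where "P x = (\<Sum>b\<in>B. (x \<bullet> b) *\<^sub>R b)" for x
  have "linear P" unfolding P_def
    by (intro linearI) (simp_all add: inner_add_left scaleR_add_left sum.distrib scaleR_sum_right)
  have "P x \<in> U" for x
    unfolding P_def span_B[symmetric] by (intro span_sum span_scale span_base) auto
  moreover have "(x - P x) \<bullet> b = 0" if "b \<in> B" for x b
  proof -
    have "P x \<bullet> b = (\<Sum>b'\<in>B. (x \<bullet> b') * (b' \<bullet> b))"
      unfolding P_def by (simp add: inner_sum_left)
    also have "\<dots> = (\<Sum>b'\<in>{b}. (x \<bullet> b') * (b' \<bullet> b))"
      using \<open>finite B\<close> that orth
      by (intro sum.mono_neutral_right) (auto simp: pairwise_def orthogonal_def)
    also have "\<dots> = x \<bullet> b" using unit[OF that] by (simp add: dot_square_norm)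
    finally show ?thesis by (simp add: inner_diff_left)
  qed
  then have "x - P x \<in> U\<^sup>\<bottom>" for x
    using orthogonal_to_span[of _ B] span_B
    by (auto simp: orthogonal_comp_def orthogonal_def inner_commute)
  ultimately show ?thesis
    using that \<open>linear P\<close> unfolding orthogonal_projection_onto_def by blast
qed

lemma orthogonal_projection_onto_fixes:
  assumes "orthogonal_projection_onto U P" "subspace U" "u \<in> U"
  shows "P u = u"
proof -
  have "u - P u \<in> U \<inter> U\<^sup>\<bottom>"
    using assms by (auto simp: orthogonal_projection_onto_def subspace_diff)
  then show ?thesis using orthogonal_Int_0[OF \<open>subspace U\<close>] by simp
qed

lemma orthogonal_projection_onto_self_adjoint:
  assumes "orthogonal_projection_onto U P"
  shows "P x \<bullet> y = x \<bullet> P y"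
proof -
  have "P x \<bullet> (y - P y) = 0" "P y \<bullet> (x - P x) = 0"
    using assms by (auto simp: orthogonal_projection_onto_def orthogonal_comp_def orthogonal_def)
  then have "P x \<bullet> y = P x \<bullet> P y" "P y \<bullet> x = P y \<bullet> P x"
    by (simp_all add: inner_diff_right)
  then show ?thesis by (metis inner_commute)
qed

text \<open>The map \<open>h\<close> inverts \<open>f\<close> between the row space \<open>R = range (adjoint f)\<close>
  and the column space \<open>range f\<close>, and kills the orthogonal complement of the latter;
  then \<open>h \<circ> f\<close> and \<open>f \<circ> h\<close> are the orthogonal projections onto these two spaces.\<close>

lemma linear_pseudo_inverse_exists:
  fixes f :: "'a::euclidean_space \<Rightarrow> 'b::euclidean_space"
  assumes "linear f"
  obtains h where "linear h" "\<And>x. f (h (f x)) = f x" "\<And>v. h (f (h v)) = h v"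
    "\<And>x y. f (h x) \<bullet> y = x \<bullet> f (h y)" "\<And>x y. h (f x) \<bullet> y = x \<bullet> h (f y)"
proof -
  define R where "R = range (adjoint f)"
  have "subspace R"
    unfolding R_def by (intro linear_subspace_image adjoint_linear assms subspace_UNIV)
  have "subspace (range f)" by (intro linear_subspace_image assms subspace_UNIV)
  obtain PR where PR: "orthogonal_projection_onto R PR"
    using orthogonal_projection_onto_exists[OF \<open>subspace R\<close>] by blast
  obtain PC where "linear PC" and PC: "orthogonal_projection_onto (range f) PC"
    using orthogonal_projection_onto_exists[OF \<open>subspace (range f)\<close>] by blast
  have f_PR: "f (PR x) = f x" for x
  proof -
    have "x - PR x \<in> f -` {0}"
      using PR ker_orthogonal_comp_adjoint[OF assms]
      by (simp add: orthogonal_projection_onto_def R_def)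
    then show ?thesis by (simp add: linear_diff[OF assms])
  qed
  have "inj_on f (span R)"
    unfolding span_eq_iff[THEN iffD2, OF \<open>subspace R\<close>]
      linear_inj_on_iff_eq_0[OF assms \<open>subspace R\<close>]
    using orthogonal_Int_0[OF \<open>subspace R\<close>] ker_orthogonal_comp_adjoint[OF assms]
    by (auto simp: R_def)
  then obtain g where "range g \<subseteq> R" "linear g" and g_f: "\<And>r. r \<in> R \<Longrightarrow> g (f r) = r"
    using linear_inj_on_left_inverse[OF assms] span_eq_iff[THEN iffD2, OF \<open>subspace R\<close>]
    by metis
  have g_f_PR: "g (f x) = PR x" for x
    using g_f[of "PR x"] f_PR PR by (simp add: orthogonal_projection_onto_def)
  define h where "h = g \<circ> PC"
  have h_f: "h (f x) = PR x" for x
    using orthogonal_projection_onto_fixes[OF PC \<open>subspace (range f)\<close>] g_f_PR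
    by (simp add: h_def)
  have f_h: "f (h v) = PC v" for v
  proof -
    obtain x where "PC v = f x" using PC by (auto simp: orthogonal_projection_onto_def)
    then show ?thesis by (simp add: h_def g_f_PR f_PR)
  qed
  have "PR (h v) = h v" for v
    using orthogonal_projection_onto_fixes[OF PR \<open>subspace R\<close>] \<open>range g \<subseteq> R\<close>
    by (auto simp: h_def)
  moreover have "linear h"
    unfolding h_def using linear_compose[OF \<open>linear PC\<close> \<open>linear g\<close>] .
  ultimately show ?thesis
    using that[of h] f_PR h_f f_h
      orthogonal_projection_onto_self_adjoint[OF PR] orthogonal_projection_onto_self_adjoint[OF PC]
    by metis
qed

lemma symmetric_matrix_if_self_adjoint:
  fixes M :: "real^'n^'n"
  assumes "\<And>x y. (M *v x) \<bullet> y = x \<bullet> (M *v y)"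
  shows "transpose M = M"
proof -
  have "(\<lambda>x. transpose M *v x) = (\<lambda>x. M *v x)"
    using adjoint_matrix[of M] adjoint_unique[of "\<lambda>x. M *v x"] assms by simp
  then show ?thesis by (simp add: matrix_eq fun_eq_iff)
qed

lemma is_pinv_exists: "\<exists>B. is_pinv (A::real^'n^'m) B"
proof -
  obtain h where "linear h" and h: "\<And>x. A *v h (A *v x) = A *v x" "\<And>v. h (A *v h v) = h v"
    "\<And>x y. (A *v h x) \<bullet> y = x \<bullet> (A *v h y)" "\<And>x y. h (A *v x) \<bullet> y = x \<bullet> h (A *v y)"
    using linear_pseudo_inverse_exists[OF matrix_vector_mul_linear[of A]] by metis
  have B: "matrix h *v v = h v" for v using \<open>linear h\<close> by (simp add: matrix_works)
  have "transpose (A ** matrix h) = A ** matrix h" "transpose (matrix h ** A) = matrix h ** A"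
    by (rule symmetric_matrix_if_self_adjoint, simp add: B h flip: matrix_vector_mul_assoc)+
  then have "is_pinv A (matrix h)"
    unfolding is_pinv_def by (simp add: matrix_eq B h flip: matrix_vector_mul_assoc)
  then show ?thesis ..
qed

lemma is_pinv_unique:
  assumes "is_pinv A B" "is_pinv A C"
  shows "B = C"
proof -
  have b1: "A ** B ** A = A" and b2: "B ** A ** B = B" and b3: "transpose (A ** B) = A ** B"
    and b4: "transpose (B ** A) = B ** A" using assms(1) unfolding is_pinv_def by auto
  have c1: "A ** C ** A = A" and c2: "C ** A ** C = C" and c3: "transpose (A ** C) = A ** C"
    and c4: "transpose (C ** A) = C ** A" using assms(2) unfolding is_pinv_def by auto
  have tA1: "transpose A = transpose A ** (A ** C)"
    using c1 c3 by (metis matrix_transpose_mul)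
  have tA2: "transpose A = (B ** A) ** transpose A"
    using b1 b4 by (metis matrix_transpose_mul matrix_mul_assoc)
  have "B = B ** (transpose B ** transpose A)"
    using b2 b3 by (metis matrix_transpose_mul matrix_mul_assoc)
  also have "\<dots> = B ** (transpose (A ** B) ** (A ** C))"
    using tA1 by (metis matrix_transpose_mul matrix_mul_assoc)
  also have "\<dots> = B ** A ** C" using b1 b3 by (metis matrix_mul_assoc)
  finally have eB: "B = B ** A ** C" .
  have "C = (transpose A ** transpose C) ** C"
    using c2 c4 by (metis matrix_transpose_mul matrix_mul_assoc)
  also have "\<dots> = ((B ** A) ** transpose (C ** A)) ** C"
    using tA2 by (metis matrix_transpose_mul matrix_mul_assoc)
  also have "\<dots> = B ** A ** C" using c1 c4 by (metis matrix_mul_assoc)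
  finally show ?thesis using eB by simp
qed

lemma is_pinv_pinv: "is_pinv A (pinv A)"
  unfolding pinv_def using is_pinv_exists[of A] is_pinv_unique[of A] by (metis theI)

lemma norm_symmetric_idempotent_le:
  fixes M :: "real^'n^'n"
  assumes "transpose M = M" "M ** M = M"
  shows "norm (M *v z) \<le> norm z"
proof -
  have "(M *v z) \<bullet> (M *v z) = z \<bullet> (M *v (M *v z))"
    by (metis dot_lmul_matrix vector_transpose_matrix assms(1))
  also have "\<dots> = z \<bullet> (M *v z)" using assms(2) by (simp add: matrix_vector_mul_assoc)
  also have "\<dots> \<le> norm z * norm (M *v z)" by (rule norm_cauchy_schwarz)
  finally have "norm (M *v z) * norm (M *v z) \<le> norm z * norm (M *v z)"
    by (simp add: dot_square_norm power2_eq_square)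
  then show ?thesis
    by (cases "M *v z = 0") (auto simp: mult_le_cancel_right)
qed

lemma norm_pinv_mult_le: "norm (pinv A *v (A *v z)) \<le> norm z"
proof -
  have "transpose (pinv A ** A) = pinv A ** A" "(pinv A ** A) ** (pinv A ** A) = pinv A ** A"
    using is_pinv_pinv[of A] by (simp_all add: is_pinv_def matrix_mul_assoc)
  then show ?thesis
    using norm_symmetric_idempotent_le by (simp add: matrix_vector_mul_assoc)
qed

lemma signed_agreement_eq:
  fixes w y :: "real^'n"
  shows "(1 - 2 *\<^sub>R w) \<bullet> (1 - 2 *\<^sub>R y) = real CARD('n) - 2 * ((1 - 2 *\<^sub>R w) \<bullet> y + w \<bullet> 1)"
proof -
  have "(1::real^'n) \<bullet> 1 = real CARD('n)" by (simp add: inner_vec_def)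
  then show ?thesis by (simp add: inner_diff_left inner_diff_right algebra_simps)
qed

theorem theorem1:
  fixes y yt :: "real^'n" and w :: "'m::finite \<Rightarrow> real^'n::finite"
    and eps :: "real^'m" and A :: "real^'n^'m" and c :: "real^'m"
  assumes y_bin: "\<forall>j. y $ j \<in> {0, 1}"
    and w_range: "\<forall>i j. 0 \<le> w i $ j \<and> w i $ j \<le> 1"
    and eps_def: "\<forall>i. eps $ i = (1 / real CARD('n)) *
                     (((1::real^'n) - 2 *\<^sub>R w i) \<bullet> y + w i \<bullet> (1::real^'n))"
    and A_def: "A = (\<chi> i. (1::real^'n) - 2 *\<^sub>R w i)"
    and c_def: "\<forall>i. c $ i = real CARD('n) * eps $ i - w i \<bullet> (1::real^'n)"
    and yt_range: "\<forall>j. 0 \<le> yt $ j \<and> yt $ j \<le> 1"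
    and yt_sol: "A *v yt = c"
  shows "norm (yt - ((1::real^'n) - y))
           \<ge> real CARD('n) * norm (pinv A *v ((1::real^'m) - 2 *\<^sub>R eps))"
proof -
  define N where "N = real CARD('n)"
  have row: "(A *v u) $ i = (1 - 2 *\<^sub>R w i) \<bullet> u" for u i
    by (simp add: A_def matrix_vector_mul_component)
  have N_eps: "N * eps $ i = (1 - 2 *\<^sub>R w i) \<bullet> y + w i \<bullet> 1" for i
    using eps_def by (simp add: N_def)
  have "A *v ((1 - y) - yt) = N *\<^sub>R (1 - 2 *\<^sub>R eps)"
  proof (subst vec_eq_iff, intro allI)
    fix i
    have "(1 - 2 *\<^sub>R w i) \<bullet> yt = (1 - 2 *\<^sub>R w i) \<bullet> y"
      using yt_sol c_def N_eps by (auto simp: vec_eq_iff row N_def)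
    then show "(A *v ((1 - y) - yt)) $ i = (N *\<^sub>R (1 - 2 *\<^sub>R eps)) $ i"
      using signed_agreement_eq[of "w i" y] N_eps[of i]
      by (simp add: row inner_diff_right N_def algebra_simps)
  qed
  then have "N * norm (pinv A *v (1 - 2 *\<^sub>R eps)) = norm (pinv A *v (A *v ((1 - y) - yt)))"
    by (simp add: N_def matrix_vector_mult_scaleR)
  also have "\<dots> \<le> norm (yt - (1 - y))"
    using norm_pinv_mult_le by (metis norm_minus_commute)
  finally show ?thesis by (simp add: N_def)
qed

end
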